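(* Let $1\le i\le n-1$. The map $\mathfrak S_i(1243,2143)\times\mathfrak S_{n-i}(1243,2143)\to\mathfrak S_n(1243,2143)$, $(\pi_1,\pi_2)\mapsto\pi_1*\pi_2$, is a bijection onto the set of $\pi\in\mathfrak S_n(1243,2143)$ with $\pi(i+1)=n$. Moreover, for all $k\ge1$, $\pi_1\in\mathfrak S_i(1243,2143)$, $\pi_2\in\mathfrak S_{n-i}(1243,2143)$, $$\tau_k(\pi_1*\pi_2)=\tau_k(\pi_1)+\tau_{k-1}(\pi_1)+\tau_k(\pi_2).$$
   Context: $\mathfrak S_m(R)$ is the set of permutations of $\{1,\dots,m\}$ avoiding every pattern in $R$ (no subsequence with the same relative order as a pattern). $\tau_k(\pi)$ is the number of increasing subsequences of length $k$ in $\pi$ for $k\ge1$, and $\tau_0(\pi)=0$. For nonempty permutations $\pi_1,\pi_2$: let $\tilde\pi_1$ be obtained by adding $|\pi_2|-1$ to every entry of $\pi_1$ and then replacing the entry equal to $|\pi_2|$ by the first entry of $\pi_2$; let $\tilde\pi_2$ be $\pi_2$ with its first entry deleted; then $\pi_1*\pi_2=\tilde\pi_1,\ N,\ \tilde\pi_2$ (concatenation) where $N=|\pi_1|+|\pi_2|$. E.g. $3124*15342=716895342$. *)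

theory Defs
  imports Main
begin

definition is_perm :: "nat \<Rightarrow> nat list \<Rightarrow> bool" where
  "is_perm m p \<longleftrightarrow> length p = m \<and> set p = {1..m}"

definition contains :: "nat list \<Rightarrow> nat list \<Rightarrow> bool" where
  "contains p s \<longleftrightarrow> (\<exists>js. sorted_wrt (<) js \<and> length js = length s \<and>
      (\<forall>j\<in>set js. j < length p) \<and>
      (\<forall>a<length s. \<forall>b<length s. (p ! (js ! a) < p ! (js ! b) \<longleftrightarrow> s ! a < s ! b)))"

definition avoids :: "nat list \<Rightarrow> nat list \<Rightarrow> bool" where
  "avoids p s \<longleftrightarrow> \<not> contains p s"

definition Av :: "nat \<Rightarrow> nat list set \<Rightarrow> nat list set" where
  "Av m R = {p. is_perm m p \<and> (\<forall>s\<in>R. avoids p s)}"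

definition tau :: "nat \<Rightarrow> nat list \<Rightarrow> nat" where
  "tau k p = (if k = 0 then 0 else
     card {js. sorted_wrt (<) js \<and> length js = k \<and> (\<forall>j\<in>set js. j < length p) \<and>
               sorted_wrt (<) (map ((!) p) js)})"

definition star :: "nat list \<Rightarrow> nat list \<Rightarrow> nat list" where
  "star p1 p2 =
     (let n2 = length p2;
          t1 = map (\<lambda>x. if x + n2 - 1 = n2 then hd p2 else x + n2 - 1) p1
      in t1 @ [length p1 + n2] @ tl p2)"

lemma star_example: "star [3,1,2,4] [1,5,3,4,2] = [7,1,6,8,9,5,3,4,2]"
  by (simp add: star_def)

end

theory Submission
  imports Defs
begin

(* Positions are 0-based, so n sits at index i of pi1 * pi2, and the entries of pi2 sit at the
   index m0 of the 1 of pi1 and at the indices i+1, ..., n-1; they are exactly the values at most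
   n - i.  Hence pi1 and pi2 both occur order-isomorphically in the product, and avoidance passes
   from the product to the factors.  Conversely, in an occurrence of 1243 or 2143 in the product
   the last entry is smaller than an earlier one, so it is not at index i; if it lies in the second
   block it is a small value, and so are the two entries below it, which forces the whole
   occurrence onto the positions of pi2.

   If pi avoids 1243 and 2143 and pi(i) = n, then every entry left of n other than the smallest
   one, m, exceeds every entry r right of n: otherwise m, x, n, r (in the order in which m and x
   appear) form a 1243 or a 2143.  So m and the entries right of n are {1, ..., n - i}, and pi
   is a product.

   An increasing subsequence of the product either stays left of index i (an increasing
   subsequence of pi1), or ends with the maximum n at index i (one of pi1, one shorter), or
   reaches beyond index i; then its last entry is small, hence so are all its entries, and it is
   an increasing subsequence of pi2. *)

lemma is_perm_distinct: "is_perm n p \<Longrightarrow> distinct p"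
  unfolding is_perm_def by (simp add: card_distinct)

lemma is_perm_nth: "is_perm n p \<Longrightarrow> j < n \<Longrightarrow> p ! j \<in> {1..n}"
  unfolding is_perm_def by (metis nth_mem)

lemma is_permI: "length p = n \<Longrightarrow> distinct p \<Longrightarrow> set p \<subseteq> {1..n} \<Longrightarrow> is_perm n p"
  unfolding is_perm_def
  by (metis card_atLeastAtMost card_subset_eq diff_Suc_1 distinct_card finite_atLeastAtMost)

lemma lower_part_of_interval:
  assumes union: "A \<union> B = {1..N}" and less: "\<forall>a\<in>A. \<forall>b\<in>B. a < b"
  shows "A = {1..card A}"
proof -
  have "finite A" using union by (metis finite_Un finite_atLeastAtMost)
  have "a \<le> card A" if "a \<in> A" for a
  proof -
    have "{1..a} \<subseteq> A"
    proof
      fix v assume "v \<in> {1..a}"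
      moreover have "a \<in> {1..N}" using that union by blast
      ultimately have "v \<in> A \<union> B" using union by auto
      then show "v \<in> A" using \<open>v \<in> {1..a}\<close> that less by fastforce
    qed
    then have "card {1..a} \<le> card A" by (rule card_mono[OF \<open>finite A\<close>])
    then show ?thesis by simp
  qed
  moreover have "A \<subseteq> {1..N}" using union by blast
  ultimately have "A \<subseteq> {1..card A}" by auto
  then show ?thesis
    using \<open>finite A\<close> by (intro card_subset_eq) auto
qed

section \<open>Occurrences of patterns\<close>

definition occurs_at :: "nat list \<Rightarrow> nat list \<Rightarrow> nat list \<Rightarrow> bool" where
  "occurs_at p s js \<longleftrightarrow> sorted_wrt (<) js \<and> length js = length s \<and> (\<forall>j\<in>set js. j < length p) \<and>
     (\<forall>a<length s. \<forall>b<length s. p ! (js ! a) < p ! (js ! b) \<longleftrightarrow> s ! a < s ! b)"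

lemma contains_iff_occurs_at: "contains p s \<longleftrightarrow> (\<exists>js. occurs_at p s js)"
  by (simp add: contains_def occurs_at_def)

lemma finite_occurs_at: "finite {js. occurs_at p s js}"
proof (rule finite_subset)
  show "{js. occurs_at p s js} \<subseteq> {js. set js \<subseteq> {..<length p} \<and> length js = length s}"
    by (auto simp: occurs_at_def)
qed (rule finite_lists_length_eq, simp)

lemma contains_1243I:
  assumes "a < b" "b < c" "c < d" "d < length p" "p ! a < p ! b" "p ! b < p ! d" "p ! d < p ! c"
  shows "contains p [1,2,4,3]"
  unfolding contains_def using assms
  by (intro exI[of _ "[a, b, c, d]"]) (auto simp: less_Suc_eq numeral_eq_Suc)

lemma contains_2143I:
  assumes "a < b" "b < c" "c < d" "d < length p" "p ! b < p ! a" "p ! a < p ! d" "p ! d < p ! c"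
  shows "contains p [2,1,4,3]"
  unfolding contains_def using assms
  by (intro exI[of _ "[a, b, c, d]"]) (auto simp: less_Suc_eq numeral_eq_Suc)

definition order_embedding :: "(nat \<Rightarrow> nat) \<Rightarrow> nat list \<Rightarrow> nat list \<Rightarrow> bool" where
  "order_embedding h p' p \<longleftrightarrow> strict_mono_on {..<length p'} h \<and> h ` {..<length p'} \<subseteq> {..<length p} \<and>
     (\<forall>x<length p'. \<forall>y<length p'. p ! h x < p ! h y \<longleftrightarrow> p' ! x < p' ! y)"

lemma occurs_at_map_iff:
  assumes emb: "order_embedding h p' p" and ks: "set ks \<subseteq> {..<length p'}"
  shows "occurs_at p s (map h ks) \<longleftrightarrow> occurs_at p' s ks"
proof -
  have mono: "strict_mono_on {..<length p'} h" and range: "h ` {..<length p'} \<subseteq> {..<length p}"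
    and order: "\<And>x y. x < length p' \<Longrightarrow> y < length p' \<Longrightarrow> p ! h x < p ! h y \<longleftrightarrow> p' ! x < p' ! y"
    using emb by (auto simp: order_embedding_def)
  have "sorted_wrt (<) (map h ks) \<longleftrightarrow> sorted_wrt (<) ks"
    unfolding sorted_wrt_map
    using ks strict_mono_on_less[OF mono] sorted_wrt_mono_rel[of ks "\<lambda>x y. h x < h y" "(<)"]
      sorted_wrt_mono_rel[of ks "(<)" "\<lambda>x y. h x < h y"]
    by (auto simp: subset_iff)
  moreover have "\<forall>j\<in>set (map h ks). j < length p" using ks range by auto
  moreover have "\<forall>a<length ks. \<forall>b<length ks.
      p ! (map h ks ! a) < p ! (map h ks ! b) \<longleftrightarrow> p' ! (ks ! a) < p' ! (ks ! b)"
    using ks order by (auto dest!: nth_mem)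
  ultimately show ?thesis
    using ks by (auto simp: occurs_at_def)
qed

lemma occurs_at_order_embedding:
  assumes "order_embedding h p' p"
  shows "bij_betw (map h) {ks. occurs_at p' s ks} {js. occurs_at p s js \<and> set js \<subseteq> h ` {..<length p'}}"
proof (rule bij_betw_imageI)
  have "{ks. occurs_at p' s ks} \<subseteq> lists {..<length p'}"
    by (auto simp: occurs_at_def)
  moreover have "inj_on h {..<length p'}"
    using assms strict_mono_on_imp_inj_on by (auto simp: order_embedding_def)
  ultimately show "inj_on (map h) {ks. occurs_at p' s ks}"
    using inj_on_map_lists inj_on_subset by blast
  show "map h ` {ks. occurs_at p' s ks} = {js. occurs_at p s js \<and> set js \<subseteq> h ` {..<length p'}}"
  proof (intro equalityI subsetI)
    fix js assume "js \<in> map h ` {ks. occurs_at p' s ks}"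
    then obtain ks where ks: "occurs_at p' s ks" and js: "js = map h ks" by blast
    then have "set ks \<subseteq> {..<length p'}" by (auto simp: occurs_at_def)
    then show "js \<in> {js. occurs_at p s js \<and> set js \<subseteq> h ` {..<length p'}}"
      using ks js occurs_at_map_iff[OF assms] by auto
  next
    fix js assume "js \<in> {js. occurs_at p s js \<and> set js \<subseteq> h ` {..<length p'}}"
    then have "js \<in> lists (h ` {..<length p'})" and js: "occurs_at p s js" by auto
    then obtain ks where "set ks \<subseteq> {..<length p'}" "js = map h ks"
      unfolding lists_image by auto
    then show "js \<in> map h ` {ks. occurs_at p' s ks}"
      using js occurs_at_map_iff[OF assms] by auto
  qed
qed

lemma contains_order_embedding:
  assumes "order_embedding h p' p" "contains p' s"
  shows "contains p s"
  using assms occurs_at_order_embedding[OF assms(1), of s]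
  unfolding contains_iff_occurs_at bij_betw_def by blast

lemma contains_if_occurs_at_within_order_embedding:
  assumes "order_embedding h p' p" "occurs_at p s js" "set js \<subseteq> h ` {..<length p'}"
  shows "contains p' s"
  using assms occurs_at_order_embedding[OF assms(1), of s]
  unfolding contains_iff_occurs_at bij_betw_def by blast

section \<open>Increasing subsequences\<close>

lemma occurs_at_upt_iff:
  "occurs_at p [0..<k] js \<longleftrightarrow>
     sorted_wrt (<) js \<and> length js = k \<and> (\<forall>j\<in>set js. j < length p) \<and> sorted_wrt (<) (map ((!) p) js)"
proof -
  have "(\<forall>a<length js. \<forall>b<length js. p ! (js ! a) < p ! (js ! b) \<longleftrightarrow> a < b)
        \<longleftrightarrow> sorted_wrt (<) (map ((!) p) js)"
    unfolding sorted_wrt_iff_nth_less by (auto, metis less_asym linorder_neqE_nat)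
  then show ?thesis
    by (auto simp: occurs_at_def)
qed

lemma tau_eq_card_occurs_at: "k \<noteq> 0 \<Longrightarrow> tau k p = card {js. occurs_at p [0..<k] js}"
  by (simp add: tau_def occurs_at_upt_iff)

lemma tau_order_embedding:
  assumes "order_embedding h p' p" "k \<noteq> 0"
  shows "card {js. occurs_at p [0..<k] js \<and> set js \<subseteq> h ` {..<length p'}} = tau k p'"
  using bij_betw_same_card[OF occurs_at_order_embedding[OF assms(1)]] assms(2)
  by (simp add: tau_eq_card_occurs_at)

lemma tau_1: "tau 1 p = length p"
proof -
  have "tau 1 p = card {js. occurs_at p [0..<1] js}"
    by (simp add: tau_eq_card_occurs_at)
  also have "{js. occurs_at p [0..<1] js} = (\<lambda>j. [j]) ` {..<length p}"
    unfolding occurs_at_upt_iff by (auto simp: length_Suc_conv)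
  also have "card \<dots> = length p"
    by (simp add: card_image inj_on_def)
  finally show ?thesis .
qed

lemma occurs_at_upt_less_iff:
  assumes "occurs_at p [0..<k] js" "x \<in> set js" "y \<in> set js"
  shows "p ! x < p ! y \<longleftrightarrow> x < y"
proof -
  have "sorted_wrt (<) js" "sorted_wrt (\<lambda>x y. p ! x < p ! y) js"
    using assms(1) by (auto simp: occurs_at_upt_iff sorted_wrt_map)
  then have "p ! x < p ! y" if "x \<in> set js" "y \<in> set js" "x < y" for x y
    using that by (induction js) auto
  then show ?thesis
    using assms(2,3) by (metis less_asym linorder_neqE_nat)
qed

lemma occurs_at_upt_through_max:
  assumes "j < length p" and max: "\<And>x. x < length p \<Longrightarrow> x \<noteq> j \<Longrightarrow> p ! x < p ! j"
  shows "{js. occurs_at p [0..<Suc k] js \<and> j \<in> set js}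
           = (\<lambda>ys. ys @ [j]) ` {ys. occurs_at p [0..<k] ys \<and> set ys \<subseteq> {..<j}}"
proof (intro equalityI subsetI)
  fix js assume "js \<in> {js. occurs_at p [0..<Suc k] js \<and> j \<in> set js}"
  then obtain xs zs where js: "js = xs @ j # zs" and occ: "occurs_at p [0..<Suc k] js"
    by (auto dest: split_list)
  have "zs = []"
  proof (rule ccontr)
    assume "zs \<noteq> []"
    then obtain z where z: "z \<in> set zs" by fastforce
    with occ js have "j < z" "z < length p" "p ! j < p ! z"
      unfolding occurs_at_upt_iff by (auto simp: sorted_wrt_append)
    with max show False by fastforce
  qed
  with occ js show "js \<in> (\<lambda>ys. ys @ [j]) ` {ys. occurs_at p [0..<k] ys \<and> set ys \<subseteq> {..<j}}"
    unfolding occurs_at_upt_iff by (auto simp: sorted_wrt_append)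
next
  fix js assume "js \<in> (\<lambda>ys. ys @ [j]) ` {ys. occurs_at p [0..<k] ys \<and> set ys \<subseteq> {..<j}}"
  with assms show "js \<in> {js. occurs_at p [0..<Suc k] js \<and> j \<in> set js}"
    unfolding occurs_at_upt_iff by (auto simp: sorted_wrt_append subset_iff intro!: max)
qed

section \<open>The product of two permutations\<close>

locale star_product =
  fixes p1 p2 :: "nat list" and m0 :: nat
  assumes perm1: "is_perm (length p1) p1" and perm2: "is_perm (length p2) p2"
    and p2_ne: "p2 \<noteq> []" and m0: "m0 < length p1" "p1 ! m0 = 1"
begin

abbreviation n1 :: nat where "n1 \<equiv> length p1"
abbreviation n2 :: nat where "n2 \<equiv> length p2"
abbreviation q :: "nat list" where "q \<equiv> star p1 p2"

text \<open>The index in \<open>q\<close> of the \<open>j\<close>-th entry of \<open>p2\<close>: the first one replaces the \<open>1\<close> of \<open>p1\<close>.\<close>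

definition pos2 :: "nat \<Rightarrow> nat" where
  "pos2 j = (if j = 0 then m0 else n1 + j)"

lemma two_le_nth_p1: "j < n1 \<Longrightarrow> j \<noteq> m0 \<Longrightarrow> 2 \<le> p1 ! j"
  using m0 is_perm_nth[OF perm1, of j] nth_eq_iff_index_eq[OF is_perm_distinct[OF perm1], of j m0]
  by fastforce

lemma length_star: "length q = n1 + n2"
  using p2_ne by (simp add: star_def Let_def)

lemma nth_star_less: "j < n1 \<Longrightarrow> q ! j = (if j = m0 then p2 ! 0 else p1 ! j + n2 - 1)"
  using p2_ne m0 is_perm_nth[OF perm1, of j] nth_eq_iff_index_eq[OF is_perm_distinct[OF perm1], of j m0]
  by (auto simp: star_def Let_def nth_append hd_conv_nth)

lemma nth_star_middle: "q ! n1 = n1 + n2"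
  by (simp add: star_def Let_def nth_append)

lemma nth_star_greater: "n1 < j \<Longrightarrow> j < n1 + n2 \<Longrightarrow> q ! j = p2 ! (j - n1)"
  using p2_ne by (auto simp: star_def Let_def nth_append nth_tl Suc_diff_Suc)

lemma nth_star_pos2: "j < n2 \<Longrightarrow> q ! pos2 j = p2 ! j"
  using m0 by (simp add: pos2_def nth_star_less nth_star_greater)

lemma image_pos2: "pos2 ` {..<n2} = insert m0 {n1<..<n1 + n2}"
proof -
  have "{..<n2} = insert 0 {1..<n2}" using p2_ne by auto
  then have "pos2 ` {..<n2} = insert (pos2 0) (pos2 ` {1..<n2})" by simp
  also have "pos2 ` {1..<n2} = (+) n1 ` {1..<n2}"
    by (auto simp: pos2_def)
  also have "\<dots> = {n1<..<n1 + n2}"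
    by auto
  finally show ?thesis by (simp add: pos2_def)
qed

lemma nth_star_le_iff:
  assumes "x < n1 + n2"
  shows "q ! x \<le> n2 \<longleftrightarrow> x \<in> pos2 ` {..<n2}"
proof -
  consider "x = m0" | "x < n1" "x \<noteq> m0" | "x = n1" | "n1 < x" by linarith
  then show ?thesis
  proof cases
    case 2
    then have "n2 < q ! x" using two_le_nth_p1 nth_star_less by fastforce
    then show ?thesis using 2 by (simp add: image_pos2)
  qed (use assms m0 p2_ne is_perm_nth[OF perm2] in
        \<open>auto simp: image_pos2 nth_star_less nth_star_middle nth_star_greater\<close>)
qed

lemma order_embedding_left: "order_embedding id p1 q"
proof -
  have "q ! x < q ! y \<longleftrightarrow> p1 ! x < p1 ! y" if "x < n1" "y < n1" for x y
    using that m0 two_le_nth_p1[of x] two_le_nth_p1[of y] is_perm_nth[OF perm2, of 0] p2_ne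
    by (auto simp: nth_star_less)
  then show ?thesis
    by (auto simp: order_embedding_def length_star strict_mono_on_def)
qed

lemma order_embedding_right: "order_embedding pos2 p2 q"
proof -
  have "strict_mono_on {..<n2} pos2"
    using m0 by (auto simp: strict_mono_on_def pos2_def)
  moreover have "pos2 ` {..<n2} \<subseteq> {..<length q}"
    using m0 by (auto simp: image_pos2 length_star)
  ultimately show ?thesis
    by (simp add: order_embedding_def nth_star_pos2)
qed

lemma is_perm_star: "is_perm (n1 + n2) q"
proof -
  have "{1..n1 + n2} \<subseteq> set q"
  proof
    fix v assume v: "v \<in> {1..n1 + n2}"
    consider "v \<le> n2" | "n2 < v" "v < n1 + n2" | "v = n1 + n2" using v by fastforce
    then show "v \<in> set q"
    proof cases
      case 1
      then have "v \<in> set p2" using v perm2 by (auto simp: is_perm_def)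
      then obtain j where "j < n2" "p2 ! j = v" by (auto simp: in_set_conv_nth)
      then have "q ! pos2 j = v" "pos2 j < length q"
        using nth_star_pos2 order_embedding_right by (auto simp: order_embedding_def)
      then show ?thesis by (metis nth_mem)
    next
      case 2
      then have "v + 1 - n2 \<in> set p1" using perm1 by (auto simp: is_perm_def)
      then obtain j where j: "j < n1" "p1 ! j = v + 1 - n2" by (auto simp: in_set_conv_nth)
      then have "j \<noteq> m0" using 2 m0 by auto
      then have "q ! j = v" using j 2 nth_star_less[of j] by auto
      then show ?thesis
        using j length_star by (metis in_set_conv_nth trans_less_add1)
    next
      case 3
      then show ?thesis
        using nth_star_middle length_star by (metis less_add_same_cancel1 nth_mem p2_ne length_greater_0_conv)
    qed
  qed
  moreover have "card (set q) \<le> card {1..n1 + n2}"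
    using card_length[of q] length_star by simp
  ultimately have "{1..n1 + n2} = set q"
    by (intro card_seteq) auto
  then show ?thesis
    using length_star by (simp add: is_perm_def)
qed

lemma contains_star_imp_factor:
  assumes s: "s \<in> {[1,2,4,3], [2,1,4,3]}" and "contains q s"
  shows "contains p1 s \<or> contains p2 s"
proof -
  obtain js where occ: "occurs_at q s js"
    using assms(2) contains_iff_occurs_at by blast
  then have "length js = 4" using s by (auto simp: occurs_at_def)
  then obtain a b c d where js: "js = [a, b, c, d]"
    by (auto simp: numeral_eq_Suc length_Suc_conv)
  have pos: "a < b" "b < c" "c < d" "d < n1 + n2"
    using occ js length_star by (auto simp: occurs_at_def)
  have order: "q ! (js ! x) < q ! (js ! y) \<longleftrightarrow> s ! x < s ! y" if "x < 4" "y < 4" for x y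
    using occ that s by (auto simp: occurs_at_def)
  have "q ! a < q ! d" "q ! b < q ! d" "q ! d < q ! c"
    using order[of 0 3] order[of 1 3] order[of 3 2] s js by auto
  consider "d < n1" | "d = n1" | "n1 < d" by linarith
  then show ?thesis
  proof cases
    case 1
    then have "set js \<subseteq> id ` {..<n1}" using js pos by auto
    then show ?thesis
      using contains_if_occurs_at_within_order_embedding[OF order_embedding_left occ] by blast
  next
    case 2
    then show ?thesis
      using \<open>q ! d < q ! c\<close> nth_star_middle is_perm_nth[OF is_perm_star, of c] pos by auto
  next
    case 3
    then have "q ! d \<le> n2" using pos nth_star_le_iff image_pos2 by auto
    then have "q ! a \<le> n2" "q ! b \<le> n2"
      using \<open>q ! a < q ! d\<close> \<open>q ! b < q ! d\<close> by auto
    then have "a \<in> pos2 ` {..<n2}" "b \<in> pos2 ` {..<n2}"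
      using pos nth_star_le_iff by auto
    then have "n1 < b" using pos m0 by (auto simp: image_pos2)
    then have "set js \<subseteq> pos2 ` {..<n2}"
      using \<open>a \<in> pos2 ` {..<n2}\<close> pos js by (auto simp: image_pos2)
    then show ?thesis
      using contains_if_occurs_at_within_order_embedding[OF order_embedding_right occ] by blast
  qed
qed

lemma occurs_at_upt_star_cases:
  assumes occ: "occurs_at q [0..<k] js"
  shows "set js \<subseteq> {..<n1} \<or> n1 \<in> set js \<or> set js \<subseteq> pos2 ` {..<n2}"
proof (rule ccontr)
  assume "\<not> ?thesis"
  then obtain x where x: "x \<in> set js" "n1 < x" and "\<not> set js \<subseteq> pos2 ` {..<n2}"
    by (auto simp: subset_iff) (metis linorder_neqE_nat)
  have in_range: "\<forall>y\<in>set js. y < n1 + n2"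
    using occ length_star by (auto simp: occurs_at_def)
  have "q ! x \<le> n2"
    using x in_range nth_star_le_iff image_pos2 by auto
  have "y \<in> pos2 ` {..<n2}" if y: "y \<in> set js" for y
  proof (cases "y < x")
    case True
    then have "q ! y < q ! x"
      using occurs_at_upt_less_iff occ x y by auto
    then show ?thesis
      using \<open>q ! x \<le> n2\<close> in_range y nth_star_le_iff[of y] by auto
  next
    case False
    then show ?thesis
      using x in_range y image_pos2 by auto
  qed
  then show False
    using \<open>\<not> set js \<subseteq> pos2 ` {..<n2}\<close> by blast
qed

lemma card_occurs_at_upt_star_through_middle:
  assumes "1 \<le> k"
  shows "card {js. occurs_at q [0..<Suc k] js \<and> n1 \<in> set js} = tau k p1"
proof -
  have "x < n1 + n2 \<Longrightarrow> x \<noteq> n1 \<Longrightarrow> q ! x < q ! n1" for x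
    using is_perm_nth[OF is_perm_star, of x] is_perm_nth[OF is_perm_star, of n1]
      nth_eq_iff_index_eq[OF is_perm_distinct[OF is_perm_star], of x n1] nth_star_middle p2_ne
    by (auto simp: length_star)
  then have "{js. occurs_at q [0..<Suc k] js \<and> n1 \<in> set js}
      = (\<lambda>ys. ys @ [n1]) ` {ys. occurs_at q [0..<k] ys \<and> set ys \<subseteq> id ` {..<n1}}"
    using occurs_at_upt_through_max[of n1 q k] p2_ne by (simp add: length_star)
  also have "card \<dots> = tau k p1"
    using tau_order_embedding[OF order_embedding_left] assms by (simp add: card_image inj_on_def)
  finally show ?thesis .
qed

lemma tau_star:
  assumes "2 \<le> k"
  shows "tau k q = tau k p1 + tau (k - 1) p1 + tau k p2"
proof -
  define A where "A = {js. occurs_at q [0..<k] js \<and> set js \<subseteq> id ` {..<n1}}"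
  define B where "B = {js. occurs_at q [0..<k] js \<and> n1 \<in> set js}"
  define C where "C = {js. occurs_at q [0..<k] js \<and> set js \<subseteq> pos2 ` {..<n2}}"
  have "{js. occurs_at q [0..<k] js} = A \<union> B \<union> C"
    using occurs_at_upt_star_cases by (auto simp: A_def B_def C_def)
  moreover have "A \<inter> C = {}"
  proof (intro equalityI subsetI)
    fix js assume js: "js \<in> A \<inter> C"
    then have "set js \<subseteq> {..<n1} \<inter> insert m0 {n1<..<n1 + n2}"
      using image_pos2 by (auto simp: A_def C_def)
    then have "set js \<subseteq> {m0}" by (auto simp: subset_iff)
    moreover have "card (set js) = k"
      using js by (auto simp: A_def occurs_at_upt_iff strict_sorted_iff distinct_card)
    ultimately show "js \<in> {}"
      using assms card_mono[of "{m0}" "set js"] by simp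
  qed simp
  moreover have "A \<inter> B = {}" "B \<inter> C = {}"
    using m0 by (auto simp: A_def B_def C_def image_pos2)
  ultimately have "tau k q = card A + card B + card C"
    using assms finite_occurs_at[of q "[0..<k]"]
    by (simp add: tau_eq_card_occurs_at card_Un_disjoint Int_Un_distrib2)
  moreover have "card B = tau (k - 1) p1"
    using card_occurs_at_upt_star_through_middle[of "k - 1"] assms by (simp add: B_def Suc_diff_Suc numeral_eq_Suc)
  ultimately show ?thesis
    using tau_order_embedding[OF order_embedding_left] tau_order_embedding[OF order_embedding_right] assms
    by (simp add: A_def C_def)
qed

end

section \<open>Splitting a permutation at its maximum\<close>

text \<open>The inverse of \<open>star\<close>: the smallest entry left of index \<open>i\<close> becomes the first entry of
  the second factor and the \<open>1\<close> of the first.\<close>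

definition unstar :: "nat \<Rightarrow> nat list \<Rightarrow> nat list \<times> nat list" where
  "unstar i p = (let L = take i p; m = Min (set L) in
     (map (\<lambda>x. if x = m then 1 else x + i + 1 - length p) L, m # drop (Suc i) p))"

lemma (in star_product) unstar_star: "unstar n1 q = (p1, p2)"
proof -
  define g where "g x = (if x + n2 - 1 = n2 then hd p2 else x + n2 - 1)" for x
  have take: "take n1 q = map g p1" and drop: "drop (Suc n1) q = tl p2"
    by (simp_all add: star_def Let_def g_def)
  have bounds: "x \<in> set p1 \<Longrightarrow> 1 \<le> x \<and> x \<le> n1" for x
    using perm1 by (auto simp: is_perm_def)
  have "hd p2 \<le> n2"
    using p2_ne is_perm_nth[OF perm2, of 0] by (simp add: hd_conv_nth)
  then have g_big: "x \<in> set p1 \<Longrightarrow> x \<noteq> 1 \<Longrightarrow> g x = x + n2 - 1 \<and> hd p2 < g x" for x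
    using bounds[of x] by (auto simp: g_def)
  have "1 \<in> set p1" using m0 nth_mem by metis
  then have "Min (set (map g p1)) = hd p2"
    using g_big by (intro Min_eqI) (force simp: g_def)+
  moreover have "map (\<lambda>y. if y = hd p2 then 1 else y + n1 + 1 - (n1 + n2)) (map g p1) = p1"
  proof (rule map_idI[of _ "_ \<circ> g", folded map_map])
    fix x assume x: "x \<in> set p1"
    show "((\<lambda>y. if y = hd p2 then 1 else y + n1 + 1 - (n1 + n2)) \<circ> g) x = x"
      using g_big[OF x] bounds[OF x] by (cases "x = 1") (auto simp: g_def)
  qed
  ultimately show ?thesis
    using p2_ne unfolding unstar_def length_star Let_def take drop by simp
qed

locale separated_at_max =
  fixes n i :: nat and p :: "nat list"
  assumes perm: "is_perm n p" and nth_i: "p ! i = n" and i: "1 \<le> i" "i < n"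
    and separated: "\<And>x r. x \<in> set (take i p) \<Longrightarrow> x \<noteq> Min (set (take i p)) \<Longrightarrow>
                           r \<in> set (drop (Suc i) p) \<Longrightarrow> r < x"
begin

abbreviation L :: "nat list" where "L \<equiv> take i p"
abbreviation R :: "nat list" where "R \<equiv> drop (Suc i) p"
abbreviation m :: nat where "m \<equiv> Min (set L)"

lemma length_p: "length p = n"
  using perm by (simp add: is_perm_def)

lemma p_split: "p = L @ n # R"
  using id_take_nth_drop[of i p] length_p i nth_i by simp

lemma length_L: "length L = i" and length_R: "length R = n - i - 1"
  using length_p i by simp_all

lemma distinct_split: "distinct L" "distinct R" "n \<notin> set L" "n \<notin> set R" "set L \<inter> set R = {}"
proof -
  have "distinct (L @ n # R)" by (metis p_split is_perm_distinct perm)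
  then show "distinct L" "distinct R" "n \<notin> set L" "n \<notin> set R" "set L \<inter> set R = {}"
    by auto
qed

lemma set_split: "insert n (set L \<union> set R) = {1..n}"
  using perm p_split by (metis is_perm_def Un_insert_right set_append list.simps(15))

lemma min_L: "m \<in> set L" "x \<in> set L \<Longrightarrow> m \<le> x"
  using length_L i by (auto intro: Min_in)

lemma low_values: "insert m (set R) = {1..n - i}"
proof -
  have "insert m (set R) \<union> insert n (set L - {m}) = {1..n}"
    using set_split min_L by auto
  moreover have "\<forall>a\<in>insert m (set R). \<forall>b\<in>insert n (set L - {m}). a < b"
  proof (intro ballI)
    fix a b assume a: "a \<in> insert m (set R)" and b: "b \<in> insert n (set L - {m})"
    have "a \<in> {1..n}" "a \<noteq> n" using a min_L set_split distinct_split by auto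
    then show "a < b"
      using a b min_L separated by fastforce
  qed
  ultimately have "insert m (set R) = {1..card (insert m (set R))}"
    by (rule lower_part_of_interval)
  moreover have "m \<notin> set R" using min_L distinct_split by blast
  then have "card (insert m (set R)) = n - i"
    using distinct_split length_R i by (simp add: distinct_card)
  ultimately show ?thesis by simp
qed

lemma high_values: "x \<in> set L \<Longrightarrow> x \<noteq> m \<Longrightarrow> n - i < x \<and> x < n"
  using low_values set_split distinct_split by fastforce

definition std :: "nat \<Rightarrow> nat" where
  "std x = (if x = m then 1 else x + i + 1 - n)"

lemma unstar_eq: "unstar i p = (map std L, m # R)"
  by (simp add: unstar_def Let_def length_p std_def[abs_def])

lemma std_high: "x \<in> set L \<Longrightarrow> x \<noteq> m \<Longrightarrow> std x = x + i + 1 - n \<and> 2 \<le> std x \<and> std x \<le> i"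
  using high_values[of x] i by (auto simp: std_def)

lemma is_perm_unstar: "is_perm i (map std L)" "is_perm (n - i) (m # R)"
proof -
  have "inj_on std (set L)"
  proof (rule inj_onI)
    fix x y assume "x \<in> set L" "y \<in> set L" "std x = std y"
    moreover have "std m = 1" by (simp add: std_def)
    ultimately show "x = y"
      using std_high high_values by (cases "x = m"; cases "y = m") fastforce+
  qed
  moreover have "std x \<in> {1..i}" if "x \<in> set L" for x
    using std_high[OF that] i by (cases "x = m") (auto simp: std_def)
  ultimately show "is_perm i (map std L)"
    using distinct_split length_L by (intro is_permI) (auto simp: distinct_map)
  show "is_perm (n - i) (m # R)"
    using low_values length_R i by (simp add: is_perm_def)
qed

lemma star_unstar: "star (map std L) (m # R) = p"
proof -
  have "map (\<lambda>y. if y + (n - i) - 1 = n - i then m else y + (n - i) - 1) (map std L) = L"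
  proof (rule map_idI[of _ "_ \<circ> std", folded map_map])
    fix x assume x: "x \<in> set L"
    show "((\<lambda>y. if y + (n - i) - 1 = n - i then m else y + (n - i) - 1) \<circ> std) x = x"
      using std_high[OF x] high_values[OF x] i by (cases "x = m") (auto simp: std_def)
  qed
  moreover have "length (m # R) = n - i" using length_R i by simp
  then have "star (map std L) (m # R)
      = map (\<lambda>y. if y + (n - i) - 1 = n - i then m else y + (n - i) - 1) (map std L) @ [i + (n - i)] @ R"
    using length_L unfolding star_def Let_def by simp
  ultimately show ?thesis
    using p_split i by simp
qed

end

lemma separated_at_max_if_avoids:
  assumes perm: "is_perm n p" and nth_i: "p ! i = n" and i: "1 \<le> i" "i < n"
    and avoids: "avoids p [1,2,4,3]" "avoids p [2,1,4,3]"
  shows "separated_at_max n i p"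
proof
  fix x r assume x: "x \<in> set (take i p)" "x \<noteq> Min (set (take i p))" and r: "r \<in> set (drop (Suc i) p)"
  define m where "m = Min (set (take i p))"
  have len: "length p = n" using perm by (simp add: is_perm_def)
  have in_take: "\<exists>j<i. p ! j = y" if "y \<in> set (take i p)" for y
    using that i len by (metis in_set_conv_nth length_take min.absorb4 nth_take)
  obtain jx where jx: "jx < i" "p ! jx = x" using in_take x(1) by blast
  have "m \<in> set (take i p)" using x(1) m_def by (metis Min_in empty_iff finite_set)
  then obtain jm where jm: "jm < i" "p ! jm = m" using in_take by blast
  obtain jr where "jr < length (drop (Suc i) p)" "drop (Suc i) p ! jr = r"
    using r by (meson in_set_conv_nth)
  then have jr: "Suc i + jr < n" "p ! (Suc i + jr) = r" using len by auto
  show "r < x"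
  proof (rule ccontr)
    assume "\<not> r < x"
    have "jx \<noteq> Suc i + jr" "jm \<noteq> jx" using jx jm jr x(2) m_def by auto
    then have "p ! jx \<noteq> p ! (Suc i + jr)" "m < x"
      using nth_eq_iff_index_eq[OF is_perm_distinct[OF perm]] jx jr len i x m_def by (auto simp: less_le)
    moreover have "r \<le> n" using is_perm_nth[OF perm, of "Suc i + jr"] jr by auto
    moreover have "r \<noteq> n"
      using nth_eq_iff_index_eq[OF is_perm_distinct[OF perm], of "Suc i + jr" i] jr nth_i len i by auto
    ultimately have "m < x" "x < r" "r < n"
      using \<open>\<not> r < x\<close> jx jr by auto
    then consider "jm < jx" | "jx < jm" using \<open>jm \<noteq> jx\<close> by linarith
    then show False
    proof cases
      case 1
      then have "contains p [1,2,4,3]"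
        using jm jx jr nth_i \<open>m < x\<close> \<open>x < r\<close> \<open>r < n\<close> len
        by (intro contains_1243I[of jm jx i "Suc i + jr"]) auto
      then show False using avoids by (simp add: avoids_def)
    next
      case 2
      then have "contains p [2,1,4,3]"
        using jm jx jr nth_i \<open>m < x\<close> \<open>x < r\<close> \<open>r < n\<close> len
        by (intro contains_2143I[of jx jm i "Suc i + jr"]) auto
      then show False using avoids by (simp add: avoids_def)
    qed
  qed
qed (use assms in auto)

lemma star_product_if_is_perm:
  assumes "is_perm i p1" "is_perm j p2" "1 \<le> i" "1 \<le> j"
  obtains m0 where "star_product p1 p2 m0"
proof -
  have "1 \<in> set p1" using assms(1,3) by (simp add: is_perm_def)
  then obtain m0 where "m0 < length p1" "p1 ! m0 = 1" by (auto simp: in_set_conv_nth)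
  with assms show ?thesis
    by (intro that) (unfold_locales, auto simp: is_perm_def)
qed

lemma tau_star:
  assumes "is_perm i p1" "is_perm j p2" "1 \<le> i" "1 \<le> j" "1 \<le> k"
  shows "tau k (star p1 p2) = tau k p1 + tau (k - 1) p1 + tau k p2"
proof -
  obtain m0 where sp: "star_product p1 p2 m0" using star_product_if_is_perm assms(1-4) .
  show ?thesis
  proof (cases "k = 1")
    case True
    have "tau 1 (star p1 p2) = tau 1 p1 + tau 1 p2"
      using star_product.length_star[OF sp] unfolding tau_1 by simp
    then show ?thesis
      using True by (simp add: tau_def[of 0])
  next
    case False
    then show ?thesis
      using assms(5) star_product.tau_star[OF sp] by simp
  qed
qed

lemma unstar_star:
  assumes "is_perm i p1" "is_perm j p2" "1 \<le> i" "1 \<le> j"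
  shows "unstar i (star p1 p2) = (p1, p2)"
  using star_product_if_is_perm[OF assms] star_product.unstar_star assms(1)
  by (metis is_perm_def)

lemma star_in_Av:
  assumes "p1 \<in> Av i {[1,2,4,3], [2,1,4,3]}" "p2 \<in> Av j {[1,2,4,3], [2,1,4,3]}" "1 \<le> i" "1 \<le> j"
  shows "star p1 p2 \<in> Av (i + j) {[1,2,4,3], [2,1,4,3]} \<and> star p1 p2 ! i = i + j"
proof -
  have perms: "is_perm i p1" "is_perm j p2" and lengths: "length p1 = i" "length p2 = j"
    using assms(1,2) by (auto simp: Av_def is_perm_def)
  obtain m0 where sp: "star_product p1 p2 m0" using star_product_if_is_perm perms assms(3,4) .
  have "avoids (star p1 p2) s" if "s \<in> {[1,2,4,3], [2,1,4,3]}" for s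
    using star_product.contains_star_imp_factor[OF sp that] assms(1,2) that by (auto simp: Av_def avoids_def)
  then show ?thesis
    using star_product.is_perm_star[OF sp] star_product.nth_star_middle[OF sp] lengths
    by (simp add: Av_def)
qed

lemma unstar_in_Av:
  assumes p: "p \<in> Av n {[1,2,4,3], [2,1,4,3]}" and "p ! i = n" "1 \<le> i" "i < n"
  shows "unstar i p \<in> Av i {[1,2,4,3], [2,1,4,3]} \<times> Av (n - i) {[1,2,4,3], [2,1,4,3]}
         \<and> star (fst (unstar i p)) (snd (unstar i p)) = p"
proof -
  obtain p1 p2 where split: "unstar i p = (p1, p2)" by fastforce
  have "separated_at_max n i p"
    using p assms(2-4) by (intro separated_at_max_if_avoids) (auto simp: Av_def)
  then have perms: "is_perm i p1" "is_perm (n - i) p2" and star: "star p1 p2 = p"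
    using separated_at_max.is_perm_unstar separated_at_max.star_unstar separated_at_max.unstar_eq split
    by fastforce+
  have "1 \<le> n - i" using assms(4) by simp
  then obtain m0 where sp: "star_product p1 p2 m0"
    using star_product_if_is_perm[OF perms assms(3)] by blast
  have "avoids p1 s \<and> avoids p2 s" if "s \<in> {[1,2,4,3], [2,1,4,3]}" for s
    using that p star star_product.order_embedding_left[OF sp] star_product.order_embedding_right[OF sp]
      contains_order_embedding by (auto simp: Av_def avoids_def)
  then show ?thesis
    using perms star split by (simp add: Av_def)
qed

theorem mainTheorem9:
  fixes n i :: nat
  assumes "1 \<le> i" and "i \<le> n - 1"
  shows "bij_betw (\<lambda>(p1, p2). star p1 p2)
           (Av i {[1,2,4,3], [2,1,4,3]} \<times> Av (n - i) {[1,2,4,3], [2,1,4,3]})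
           {p \<in> Av n {[1,2,4,3], [2,1,4,3]}. p ! i = n}
       \<and> (\<forall>k\<ge>1. \<forall>p1\<in>Av i {[1,2,4,3], [2,1,4,3]}. \<forall>p2\<in>Av (n - i) {[1,2,4,3], [2,1,4,3]}.
            tau k (star p1 p2) = tau k p1 + tau (k - 1) p1 + tau k p2)"
proof
  have "i < n" "1 \<le> n - i" using assms by auto
  show "bij_betw (\<lambda>(p1, p2). star p1 p2)
           (Av i {[1,2,4,3], [2,1,4,3]} \<times> Av (n - i) {[1,2,4,3], [2,1,4,3]})
           {p \<in> Av n {[1,2,4,3], [2,1,4,3]}. p ! i = n}"
  proof (rule bij_betw_byWitness[where f' = "unstar i"])
    show "\<forall>a\<in>Av i {[1,2,4,3], [2,1,4,3]} \<times> Av (n - i) {[1,2,4,3], [2,1,4,3]}.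
            unstar i (case a of (p1, p2) \<Rightarrow> star p1 p2) = a"
      using unstar_star assms \<open>1 \<le> n - i\<close> by (auto simp: Av_def)
    show "\<forall>p\<in>{p \<in> Av n {[1,2,4,3], [2,1,4,3]}. p ! i = n}. (case unstar i p of (p1, p2) \<Rightarrow> star p1 p2) = p"
      using unstar_in_Av assms \<open>i < n\<close> by (auto simp: split_beta)
    show "(\<lambda>(p1, p2). star p1 p2) ` (Av i {[1,2,4,3], [2,1,4,3]} \<times> Av (n - i) {[1,2,4,3], [2,1,4,3]})
            \<subseteq> {p \<in> Av n {[1,2,4,3], [2,1,4,3]}. p ! i = n}"
      using star_in_Av[of _ i _ "n - i"] assms \<open>i < n\<close> \<open>1 \<le> n - i\<close> by auto
    show "unstar i ` {p \<in> Av n {[1,2,4,3], [2,1,4,3]}. p ! i = n}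
            \<subseteq> Av i {[1,2,4,3], [2,1,4,3]} \<times> Av (n - i) {[1,2,4,3], [2,1,4,3]}"
      using unstar_in_Av assms \<open>i < n\<close> by blast
  qed
  show "\<forall>k\<ge>1. \<forall>p1\<in>Av i {[1,2,4,3], [2,1,4,3]}. \<forall>p2\<in>Av (n - i) {[1,2,4,3], [2,1,4,3]}.
            tau k (star p1 p2) = tau k p1 + tau (k - 1) p1 + tau k p2"
    using assms \<open>1 \<le> n - i\<close> tau_star by (auto simp: Av_def)
qed

end
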